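(* Let $\mathcal{X}\subseteq\mathbb{R}^{d_X}$, $\mathcal{Z}\subseteq\mathbb{R}^{d_Z}$, and let $\Theta=\Gamma\times\Delta\subseteq\mathbb{R}^{d_\gamma+d_\delta}$ be compact and non-empty. Let $X_1,\ldots,X_n$ and $Z_1,\ldots,Z_n$ be independent and identically distributed random vectors with the same distributions as random vectors $X$ (values in $\mathcal{X}$) and $Z$ (values in $\mathcal{Z}$), respectively. Let $G:\mathcal{Z}\times\Gamma\to\mathcal{X}$ and $D:\mathcal{X}\times\Delta\to(0,1)$ be functions, and define $F(x,z,\gamma,\delta)=\ln(D(x,\delta))+\ln(1-D(G(z,\gamma),\delta))$; assume $F(X,Z,\gamma,\delta)$ is measurable for every $(\gamma,\delta)\in\Theta$ and, with probability one, continuous in $(\gamma,\delta)$ on $\Theta$. Define $f(\gamma,\delta)=\mathbb{E}[F(X,Z,\gamma,\delta)]$, $\varphi(\gamma)=\sup_{\delta\in\Delta}f(\gamma,\delta)$, $V_0=\inf_{\gamma\in\Gamma}\varphi(\gamma)$, and $\Theta_0=\{(\gamma_0,\delta_0)\in\Theta: f(\gamma_0,\delta_0)=\varphi(\gamma_0)\text{ and }\varphi(\gamma_0)=V_0\}$. Define the sample quantities $\hat f_n(\gamma,\delta)=\frac1n\sum_{i=1}^nF(X_i,Z_i,\gamma,\delta)$, $\hat\varphi_n(\gamma)=\sup_{\delta\in\Delta}\hat f_n(\gamma,\delta)$, $\hat V_n=\inf_{\gamma\in\Gamma}\hat\varphi_n(\gamma)$, $\hat Q_n(\gamma,\delta)=\max\{\hat\varphi_n(\gamma)-\hat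 f_n(\gamma,\delta),\ \hat\varphi_n(\gamma)-\hat V_n\}$, and for a sequence of random variables $\tau_n$, $\hat\Theta_n(\tau_n)=\{\theta\in\Theta:\hat Q_n(\theta)\le\tau_n\}$. (a) Suppose $\sup_{\theta\in\Theta}|\hat f_n(\theta)-f(\theta)|\to 0$ in probability with $f$ continuous on $\Theta$, and suppose $\tau_n$ is a sequence of non-negative random variables with $\tau_n\to0$ in probability. Then $\sup_{\theta\in\hat\Theta_n(\tau_n)}d(\theta,\Theta_0)\to0$ in probability, and $\hat V_n\to V_0$ in probability. (b) Suppose $\sup_{\theta\in\Theta}|\hat f_n(\theta)-f(\theta)|\to 0$ in probability with $f$ continuous on $\Theta$ and moreover $\sup_{\theta\in\Theta}n^{1/2}|\hat f_n(\theta)-f(\theta)|=O_p(1)$, and suppose $\tau_n$ is a sequence of positive random variables with $\tau_n\to0$ in probability and $n^{-1/2}/\tau_n\to0$ in probability. Then $\sup_{\theta\in\Theta_0}d(\theta,\hat\Theta_n(\tau_n))\to0$ in probability, so that $d_H(\hat\Theta_n(\tau_n),\Theta_0)\to0$ in probability.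
   Context: $|\cdot|$ is the Euclidean norm; for a point $a$ and a set $B$, $d(a,B)=\inf_{b\in B}|a-b|$. For non-empty bounded sets $A,B$ the Hausdorff distance is $d_H(A,B)=\max\{\sup_{a\in A}d(a,B),\sup_{b\in B}d(b,A)\}$. $O_p(1)$ denotes a sequence of random variables bounded in probability. $\Theta_0$ is the set of solutions of the population minimax problem $\inf_{\gamma}\sup_{\delta}f(\gamma,\delta)$ and $\hat\Theta_n(\tau_n)$ the set of $\tau_n$-approximate solutions of the sample problem $\inf_\gamma\sup_\delta\hat f_n(\gamma,\delta)$. *)

theory Defs
  imports "HOL-Probability.Probability"
begin

definition ganF :: "('x \<Rightarrow> 'd \<Rightarrow> real) \<Rightarrow> ('z \<Rightarrow> 'g \<Rightarrow> 'x) \<Rightarrow> 'x \<Rightarrow> 'z \<Rightarrow> 'g \<Rightarrow> 'd \<Rightarrow> real"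
  where "ganF D G x z \<gamma> \<delta> = ln (D x \<delta>) + ln (1 - D (G z \<gamma>) \<delta>)"

definition phi_of :: "'d set \<Rightarrow> ('g \<times> 'd \<Rightarrow> real) \<Rightarrow> 'g \<Rightarrow> real"
  where "phi_of \<Delta> g \<gamma> = (SUP \<delta>\<in>\<Delta>. g (\<gamma>, \<delta>))"

definition V_of :: "'g set \<Rightarrow> 'd set \<Rightarrow> ('g \<times> 'd \<Rightarrow> real) \<Rightarrow> real"
  where "V_of \<Gamma> \<Delta> g = (INF \<gamma>\<in>\<Gamma>. phi_of \<Delta> g \<gamma>)"

text \<open>Set of solutions of the minimax problem (Theta_0 when g = f).\<close>
definition minimax_sols :: "'g set \<Rightarrow> 'd set \<Rightarrow> ('g \<times> 'd \<Rightarrow> real) \<Rightarrow> ('g \<times> 'd) set"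
  where "minimax_sols \<Gamma> \<Delta> g =
    {\<theta> \<in> \<Gamma> \<times> \<Delta>. g \<theta> = phi_of \<Delta> g (fst \<theta>) \<and> phi_of \<Delta> g (fst \<theta>) = V_of \<Gamma> \<Delta> g}"

definition Q_of :: "'g set \<Rightarrow> 'd set \<Rightarrow> ('g \<times> 'd \<Rightarrow> real) \<Rightarrow> 'g \<times> 'd \<Rightarrow> real"
  where "Q_of \<Gamma> \<Delta> g \<theta> =
    max (phi_of \<Delta> g (fst \<theta>) - g \<theta>) (phi_of \<Delta> g (fst \<theta>) - V_of \<Gamma> \<Delta> g)"

definition approx_sols :: "'g set \<Rightarrow> 'd set \<Rightarrow> ('g \<times> 'd \<Rightarrow> real) \<Rightarrow> real \<Rightarrow> ('g \<times> 'd) set"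
  where "approx_sols \<Gamma> \<Delta> g t = {\<theta> \<in> \<Gamma> \<times> \<Delta>. Q_of \<Gamma> \<Delta> g \<theta> \<le> t}"

definition fhat :: "('x \<Rightarrow> 'd \<Rightarrow> real) \<Rightarrow> ('z \<Rightarrow> 'g \<Rightarrow> 'x) \<Rightarrow> (nat \<Rightarrow> 'a \<Rightarrow> 'x) \<Rightarrow> (nat \<Rightarrow> 'a \<Rightarrow> 'z)
    \<Rightarrow> nat \<Rightarrow> 'a \<Rightarrow> 'g \<times> 'd \<Rightarrow> real"
  where "fhat D G Xs Zs n \<omega> \<theta> =
    (\<Sum>i = 1..n. ganF D G (Xs i \<omega>) (Zs i \<omega>) (fst \<theta>) (snd \<theta>)) / real n"

text \<open>Hausdorff distance (used only for non-empty bounded sets, as in the paper).\<close>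
definition hausdorff_dist :: "'b::metric_space set \<Rightarrow> 'b set \<Rightarrow> real"
  where "hausdorff_dist A B = max (SUP a\<in>A. infdist a B) (SUP b\<in>B. infdist b A)"

text \<open>Outer probability of S is less than e (S need not be measurable).\<close>
definition outer_prob_less :: "'a measure \<Rightarrow> 'a set \<Rightarrow> real \<Rightarrow> bool"
  where "outer_prob_less M S e \<longleftrightarrow> (\<exists>A\<in>sets M. S \<inter> space M \<subseteq> A \<and> measure M A < e)"

definition vanishing_events :: "'a measure \<Rightarrow> (nat \<Rightarrow> 'a set) \<Rightarrow> bool"
  where "vanishing_events M E \<longleftrightarrow> (\<forall>e>0. eventually (\<lambda>n. outer_prob_less M (E n) e) sequentially)"

definition tendsto_in_prob :: "'a measure \<Rightarrow> (nat \<Rightarrow> 'a \<Rightarrow> real) \<Rightarrow> real \<Rightarrow> bool"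
  where "tendsto_in_prob M Y c \<longleftrightarrow>
    (\<forall>\<epsilon>>0. vanishing_events M (\<lambda>n. {\<omega> \<in> space M. \<bar>Y n \<omega> - c\<bar> > \<epsilon>}))"

end

theory Submission
  imports Defs
begin

text \<open>
  For continuous \<open>f\<close> on the compact set \<open>\<Theta> = \<Gamma> \<times> \<Delta>\<close> the criterion
  \<open>Q(\<gamma>,\<delta>) = max (\<phi>(\<gamma>) - f(\<gamma>,\<delta>)) (\<phi>(\<gamma>) - V)\<close> is continuous, non-negative and vanishes exactly
  on \<open>\<Theta>\<^sub>0\<close>, so outside every \<open>\<epsilon>\<close>-neighbourhood of \<open>\<Theta>\<^sub>0\<close> it is bounded below by some \<open>c > 0\<close>.
  A uniform perturbation of \<open>f\<close> by \<open>\<eta>\<close> moves \<open>\<phi>\<close> and \<open>V\<close> by at most \<open>\<eta>\<close> and \<open>Q\<close> by at most \<open>2\<eta>\<close>.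
  Hence every \<open>\<tau>\<^sub>n\<close>-approximate solution lies within \<open>\<epsilon>\<close> of \<open>\<Theta>\<^sub>0\<close> once the uniform error and
  \<open>\<tau>\<^sub>n\<close> are below \<open>c/4\<close>; conversely \<open>\<Theta>\<^sub>0\<close> is contained in the approximate solution set once
  twice the uniform error is below \<open>\<tau>\<^sub>n\<close>, which the rate conditions of (b) make hold with
  probability tending to one.
\<close>

lemma SUP_abs_diff_le:
  fixes g h :: "'b \<Rightarrow> real"
  assumes "A \<noteq> {}" and bdd_h: "bdd_above (h ` A)" and close: "\<And>x. x \<in> A \<Longrightarrow> \<bar>g x - h x\<bar> \<le> \<eta>"
  shows "\<bar>(SUP x\<in>A. g x) - (SUP x\<in>A. h x)\<bar> \<le> \<eta>"
proof -
  obtain b where "\<And>x. x \<in> A \<Longrightarrow> h x \<le> b" using bdd_h by (auto simp: bdd_above_def)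
  then have bdd_g: "bdd_above (g ` A)"
    using close by (intro bdd_aboveI2[where M = "b + \<eta>"]) (force simp: abs_le_iff)
  have "g x \<le> (SUP x\<in>A. h x) + \<eta>" "h x \<le> (SUP x\<in>A. g x) + \<eta>" if "x \<in> A" for x
    using cSUP_upper[OF that bdd_h] cSUP_upper[OF that bdd_g] close[OF that] by (auto simp: abs_le_iff)
  then show ?thesis
    using cSUP_least[OF \<open>A \<noteq> {}\<close>] by (smt (verit))
qed

lemma INF_abs_diff_le:
  fixes g h :: "'b \<Rightarrow> real"
  assumes "A \<noteq> {}" and bdd_h: "bdd_below (h ` A)" and close: "\<And>x. x \<in> A \<Longrightarrow> \<bar>g x - h x\<bar> \<le> \<eta>"
  shows "\<bar>(INF x\<in>A. g x) - (INF x\<in>A. h x)\<bar> \<le> \<eta>"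
proof -
  obtain b where "\<And>x. x \<in> A \<Longrightarrow> b \<le> h x" using bdd_h by (auto simp: bdd_below_def)
  then have bdd_g: "bdd_below (g ` A)"
    using close by (intro bdd_belowI2[where m = "b - \<eta>"]) (force simp: abs_le_iff)
  have "(INF x\<in>A. h x) - \<eta> \<le> g x" "(INF x\<in>A. g x) - \<eta> \<le> h x" if "x \<in> A" for x
    using cINF_lower[OF bdd_h that] cINF_lower[OF bdd_g that] close[OF that] by (auto simp: abs_le_iff)
  then show ?thesis
    using cINF_greatest[OF \<open>A \<noteq> {}\<close>] by (smt (verit))
qed

lemma hausdorff_dist_le:
  assumes "B \<noteq> {}" and "B \<subseteq> A" and "\<And>a. a \<in> A \<Longrightarrow> infdist a B \<le> \<epsilon>"
  shows "hausdorff_dist A B \<le> \<epsilon>"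
proof -
  have "A \<noteq> {}" using assms(1,2) by blast
  have "(SUP b\<in>B. infdist b A) = 0"
    using assms(1,2) by (subst SUP_cong[of B B _ "\<lambda>_. 0"]) (auto simp: subset_iff)
  moreover have "0 \<le> \<epsilon>"
    using assms(3) \<open>A \<noteq> {}\<close> infdist_nonneg by (meson ex_in_conv order_trans)
  ultimately show ?thesis
    unfolding hausdorff_dist_def using assms(3) by (simp add: cSUP_least[OF \<open>A \<noteq> {}\<close>])
qed

lemma outer_prob_less_cover:
  assumes "outer_prob_less M A a" and "outer_prob_less M B b" and "S \<subseteq> A \<union> B"
  shows "outer_prob_less M S (a + b)"
proof -
  obtain A' where A': "A' \<in> sets M" "A \<inter> space M \<subseteq> A'" "measure M A' < a"
    using assms(1) unfolding outer_prob_less_def by blast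
  obtain B' where B': "B' \<in> sets M" "B \<inter> space M \<subseteq> B'" "measure M B' < b"
    using assms(2) unfolding outer_prob_less_def by blast
  have "measure M (A' \<union> B') \<le> measure M A' + measure M B'"
    by (rule measure_Un_le[OF A'(1) B'(1)])
  then show ?thesis
    unfolding outer_prob_less_def using A' B' assms(3) by (intro bexI[of _ "A' \<union> B'"]) auto
qed

lemma vanishing_events_cover:
  assumes "vanishing_events M A" and "vanishing_events M B" and "\<And>n. S n \<subseteq> A n \<union> B n"
  shows "vanishing_events M S"
  unfolding vanishing_events_def
proof (intro allI impI)
  fix e :: real assume "e > 0"
  then have "eventually (\<lambda>n. outer_prob_less M (A n) (e / 2) \<and> outer_prob_less M (B n) (e / 2)) sequentially"
    using assms(1,2) unfolding vanishing_events_def by (simp add: eventually_conj)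
  then show "eventually (\<lambda>n. outer_prob_less M (S n) e) sequentially"
  proof eventually_elim
    case (elim n)
    from outer_prob_less_cover[OF elim[THEN conjunct1] elim[THEN conjunct2] assms(3)]
    show ?case by simp
  qed
qed

lemma vanishing_events_subset:
  assumes "vanishing_events M A" and "\<And>n. S n \<subseteq> A n"
  shows "vanishing_events M S"
  by (rule vanishing_events_cover[OF assms(1) assms(1)]) (use assms(2) in blast)

lemma vanishing_events_deviation_exceeds_tolerance:
  fixes r :: "nat \<Rightarrow> real" and \<tau> :: "nat \<Rightarrow> 'a \<Rightarrow> real" and fh :: "nat \<Rightarrow> 'a \<Rightarrow> 't \<Rightarrow> real"
  assumes bounded: "\<forall>e>0. \<exists>K. eventually (\<lambda>n. outer_prob_less M
              {\<omega> \<in> space M. \<exists>\<theta>\<in>\<Theta>. r n * \<bar>fh n \<omega> \<theta> - f \<theta>\<bar> > K} e) sequentially"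
    and rate_pos: "eventually (\<lambda>n. 0 < r n) sequentially"
    and tolerance_pos: "\<forall>n. \<forall>\<omega>\<in>space M. 0 < \<tau> n \<omega>"
    and tolerance_slow: "tendsto_in_prob M (\<lambda>n \<omega>. (1 / r n) / \<tau> n \<omega>) 0"
    and "c > 0"
  shows "vanishing_events M (\<lambda>n. {\<omega> \<in> space M. \<exists>\<theta>\<in>\<Theta>. \<tau> n \<omega> < c * \<bar>fh n \<omega> \<theta> - f \<theta>\<bar>})"
  unfolding vanishing_events_def
proof (intro allI impI)
  fix e :: real assume "e > 0"
  then obtain K where bounded_K: "eventually (\<lambda>n. outer_prob_less M
      {\<omega> \<in> space M. \<exists>\<theta>\<in>\<Theta>. r n * \<bar>fh n \<omega> \<theta> - f \<theta>\<bar> > K} (e / 2)) sequentially"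
    using bounded by (meson half_gt_zero)
  define K' where "K' = max K 1"
  have "K' > 0" by (simp add: K'_def)
  then have "eventually (\<lambda>n. outer_prob_less M
      {\<omega> \<in> space M. \<bar>(1 / r n) / \<tau> n \<omega> - 0\<bar> > 1 / (c * K')} (e / 2)) sequentially"
    using tolerance_slow \<open>e > 0\<close> \<open>c > 0\<close> unfolding tendsto_in_prob_def vanishing_events_def by simp
  with bounded_K rate_pos
  show "eventually (\<lambda>n. outer_prob_less M
      {\<omega> \<in> space M. \<exists>\<theta>\<in>\<Theta>. \<tau> n \<omega> < c * \<bar>fh n \<omega> \<theta> - f \<theta>\<bar>} e) sequentially"
  proof eventually_elim
    case (elim n)
    have dominated: "\<not> \<tau> n \<omega> < c * \<bar>fh n \<omega> \<theta> - f \<theta>\<bar>"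
      if "\<omega> \<in> space M" "\<theta> \<in> \<Theta>" "\<not> r n * \<bar>fh n \<omega> \<theta> - f \<theta>\<bar> > K"
        and "\<not> \<bar>(1 / r n) / \<tau> n \<omega> - 0\<bar> > 1 / (c * K')" for \<omega> \<theta>
    proof -
      have "0 < \<tau> n \<omega>" using tolerance_pos that(1) by blast
      then have "c * K' \<le> r n * \<tau> n \<omega>"
        using that(4) \<open>0 < r n\<close> \<open>c > 0\<close> \<open>K' > 0\<close> by (simp add: field_simps not_less)
      moreover have "r n * (c * \<bar>fh n \<omega> \<theta> - f \<theta>\<bar>) \<le> c * K'"
        using that(3) \<open>c > 0\<close> by (simp add: K'_def)
      ultimately have "r n * (c * \<bar>fh n \<omega> \<theta> - f \<theta>\<bar>) \<le> r n * \<tau> n \<omega>" by linarith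
      then show ?thesis using \<open>0 < r n\<close> by (simp add: not_less)
    qed
    have "{\<omega> \<in> space M. \<exists>\<theta>\<in>\<Theta>. \<tau> n \<omega> < c * \<bar>fh n \<omega> \<theta> - f \<theta>\<bar>} \<subseteq>
        {\<omega> \<in> space M. \<exists>\<theta>\<in>\<Theta>. r n * \<bar>fh n \<omega> \<theta> - f \<theta>\<bar> > K} \<union>
        {\<omega> \<in> space M. \<bar>(1 / r n) / \<tau> n \<omega> - 0\<bar> > 1 / (c * K')}"
      using dominated by blast
    from outer_prob_less_cover[OF elim(1,3) this] show ?case by simp
  qed
qed

locale compact_minimax =
  fixes \<Gamma> :: "'g::metric_space set" and \<Delta> :: "'d::metric_space set" and f :: "'g \<times> 'd \<Rightarrow> real"
  assumes compact: "compact (\<Gamma> \<times> \<Delta>)" and nonempty: "\<Gamma> \<times> \<Delta> \<noteq> {}"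
    and continuous: "continuous_on (\<Gamma> \<times> \<Delta>) f"
begin

lemma Gamma_nonempty: "\<Gamma> \<noteq> {}" and Delta_nonempty: "\<Delta> \<noteq> {}"
  using nonempty by auto

lemma compact_Gamma: "compact \<Gamma>"
  using compact_continuous_image[OF continuous_on_fst[OF continuous_on_id] compact] Delta_nonempty
  by simp

lemma compact_Delta: "compact \<Delta>"
  using compact_continuous_image[OF continuous_on_snd[OF continuous_on_id] compact] Gamma_nonempty
  by simp

lemma bounded_f: obtains B where "\<forall>\<theta>\<in>\<Gamma> \<times> \<Delta>. \<bar>f \<theta>\<bar> \<le> B"
  using compact_imp_bounded[OF compact_continuous_image[OF continuous compact]]
  by (auto simp: bounded_real)

lemma bdd_above_slice: "\<gamma> \<in> \<Gamma> \<Longrightarrow> bdd_above ((\<lambda>\<delta>. f (\<gamma>, \<delta>)) ` \<Delta>)"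
proof -
  obtain B where "\<forall>\<theta>\<in>\<Gamma> \<times> \<Delta>. \<bar>f \<theta>\<bar> \<le> B" by (rule bounded_f)
  then show "\<gamma> \<in> \<Gamma> \<Longrightarrow> ?thesis" by (intro bdd_aboveI2[where M = B]) (auto simp: abs_le_iff)
qed

lemma le_phi_of: "\<gamma> \<in> \<Gamma> \<Longrightarrow> \<delta> \<in> \<Delta> \<Longrightarrow> f (\<gamma>, \<delta>) \<le> phi_of \<Delta> f \<gamma>"
  unfolding phi_of_def by (rule cSUP_upper) (auto intro: bdd_above_slice)

lemma bdd_below_phi_of: "bdd_below (phi_of \<Delta> f ` \<Gamma>)"
proof -
  obtain B where B: "\<forall>\<theta>\<in>\<Gamma> \<times> \<Delta>. \<bar>f \<theta>\<bar> \<le> B" by (rule bounded_f)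
  obtain \<delta> where "\<delta> \<in> \<Delta>" using Delta_nonempty by blast
  show ?thesis
    using B le_phi_of[OF _ \<open>\<delta> \<in> \<Delta>\<close>] \<open>\<delta> \<in> \<Delta>\<close>
    by (intro bdd_belowI2[where m = "-B"]) (force simp: abs_le_iff)
qed

lemma V_of_le_phi_of: "\<gamma> \<in> \<Gamma> \<Longrightarrow> V_of \<Gamma> \<Delta> f \<le> phi_of \<Delta> f \<gamma>"
  unfolding V_of_def by (rule cINF_lower[OF bdd_below_phi_of])

lemma minimax_sols_eq_approx_sols_0: "minimax_sols \<Gamma> \<Delta> f = approx_sols \<Gamma> \<Delta> f 0"
  using le_phi_of V_of_le_phi_of
  unfolding minimax_sols_def approx_sols_def Q_of_def by (fastforce simp: mem_Times_iff)

context
  fixes g :: "'g \<times> 'd \<Rightarrow> real" and \<eta> :: real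
  assumes uniformly_close: "\<forall>\<theta>\<in>\<Gamma> \<times> \<Delta>. \<bar>g \<theta> - f \<theta>\<bar> \<le> \<eta>"
begin

lemma phi_of_perturb: "\<gamma> \<in> \<Gamma> \<Longrightarrow> \<bar>phi_of \<Delta> g \<gamma> - phi_of \<Delta> f \<gamma>\<bar> \<le> \<eta>"
  unfolding phi_of_def
  by (rule SUP_abs_diff_le[OF Delta_nonempty bdd_above_slice]) (use uniformly_close in auto)

lemma V_of_perturb: "\<bar>V_of \<Gamma> \<Delta> g - V_of \<Gamma> \<Delta> f\<bar> \<le> \<eta>"
  unfolding V_of_def
  by (rule INF_abs_diff_le[OF Gamma_nonempty bdd_below_phi_of phi_of_perturb])

lemma Q_of_perturb:
  assumes "\<theta> \<in> \<Gamma> \<times> \<Delta>"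
  shows "\<bar>Q_of \<Gamma> \<Delta> g \<theta> - Q_of \<Gamma> \<Delta> f \<theta>\<bar> \<le> 2 * \<eta>"
proof -
  have "\<bar>g \<theta> - f \<theta>\<bar> \<le> \<eta>" using uniformly_close assms by blast
  moreover have "\<bar>phi_of \<Delta> g (fst \<theta>) - phi_of \<Delta> f (fst \<theta>)\<bar> \<le> \<eta>"
    using phi_of_perturb assms by (auto simp: mem_Times_iff)
  ultimately show ?thesis
    using V_of_perturb unfolding Q_of_def by (auto simp: abs_le_iff max_def)
qed

end

lemma continuous_on_phi_of: "continuous_on \<Gamma> (phi_of \<Delta> f)"
  unfolding continuous_on_iff
proof (intro ballI allI impI)
  fix \<gamma> and e :: real assume "\<gamma> \<in> \<Gamma>" "0 < e"
  obtain d where "d > 0"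
    and d: "\<And>u v. u \<in> \<Gamma> \<times> \<Delta> \<Longrightarrow> v \<in> \<Gamma> \<times> \<Delta> \<Longrightarrow> dist v u < d \<Longrightarrow> dist (f v) (f u) < e / 2"
    using compact_uniformly_continuous[OF continuous compact] \<open>0 < e\<close>
    unfolding uniformly_continuous_on_def by (meson half_gt_zero)
  have "dist (phi_of \<Delta> f \<gamma>') (phi_of \<Delta> f \<gamma>) < e" if "\<gamma>' \<in> \<Gamma>" "dist \<gamma>' \<gamma> < d" for \<gamma>'
  proof -
    have "\<bar>f (\<gamma>', \<delta>) - f (\<gamma>, \<delta>)\<bar> \<le> e / 2" if "\<delta> \<in> \<Delta>" for \<delta>
      using d[of "(\<gamma>, \<delta>)" "(\<gamma>', \<delta>)"] \<open>\<gamma> \<in> \<Gamma>\<close> \<open>\<gamma>' \<in> \<Gamma>\<close> \<open>dist \<gamma>' \<gamma> < d\<close> that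
      by (simp add: dist_Pair_Pair dist_real_def)
    then have "\<bar>phi_of \<Delta> f \<gamma>' - phi_of \<Delta> f \<gamma>\<bar> \<le> e / 2"
      unfolding phi_of_def by (intro SUP_abs_diff_le[OF Delta_nonempty bdd_above_slice[OF \<open>\<gamma> \<in> \<Gamma>\<close>]])
    then show ?thesis using \<open>0 < e\<close> by (simp add: dist_real_def)
  qed
  then show "\<exists>d>0. \<forall>\<gamma>'\<in>\<Gamma>. dist \<gamma>' \<gamma> < d \<longrightarrow> dist (phi_of \<Delta> f \<gamma>') (phi_of \<Delta> f \<gamma>) < e"
    using \<open>d > 0\<close> by blast
qed

lemma continuous_on_Q_of: "continuous_on (\<Gamma> \<times> \<Delta>) (Q_of \<Gamma> \<Delta> f)"
proof -
  have "continuous_on (\<Gamma> \<times> \<Delta>) (\<lambda>\<theta>. phi_of \<Delta> f (fst \<theta>))"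
    by (rule continuous_on_compose2[OF continuous_on_phi_of continuous_on_fst[OF continuous_on_id]])
       auto
  then show ?thesis
    unfolding Q_of_def by (intro continuous_intros continuous)
qed

lemma minimax_sols_nonempty: "minimax_sols \<Gamma> \<Delta> f \<noteq> {}"
proof -
  obtain \<gamma> where "\<gamma> \<in> \<Gamma>" and \<gamma>_min: "\<And>\<gamma>'. \<gamma>' \<in> \<Gamma> \<Longrightarrow> phi_of \<Delta> f \<gamma> \<le> phi_of \<Delta> f \<gamma>'"
    using continuous_attains_inf[OF compact_Gamma Gamma_nonempty continuous_on_phi_of] by blast
  have "continuous_on \<Delta> (\<lambda>\<delta>. f (\<gamma>, \<delta>))"
    by (rule continuous_on_compose2[OF continuous]) (auto intro!: continuous_intros simp: \<open>\<gamma> \<in> \<Gamma>\<close>)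
  then obtain \<delta> where "\<delta> \<in> \<Delta>" and \<delta>_max: "\<And>\<delta>'. \<delta>' \<in> \<Delta> \<Longrightarrow> f (\<gamma>, \<delta>') \<le> f (\<gamma>, \<delta>)"
    using continuous_attains_sup[OF compact_Delta Delta_nonempty] by blast
  have "phi_of \<Delta> f \<gamma> = f (\<gamma>, \<delta>)"
    using le_phi_of[OF \<open>\<gamma> \<in> \<Gamma>\<close> \<open>\<delta> \<in> \<Delta>\<close>] cSUP_least[OF Delta_nonempty] \<delta>_max
    unfolding phi_of_def by (metis order_antisym)
  moreover have "phi_of \<Delta> f \<gamma> = V_of \<Gamma> \<Delta> f"
    using V_of_le_phi_of[OF \<open>\<gamma> \<in> \<Gamma>\<close>] cINF_greatest[OF Gamma_nonempty] \<gamma>_min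
    unfolding V_of_def by (metis order_antisym)
  ultimately have "(\<gamma>, \<delta>) \<in> minimax_sols \<Gamma> \<Delta> f"
    unfolding minimax_sols_def using \<open>\<gamma> \<in> \<Gamma>\<close> \<open>\<delta> \<in> \<Delta>\<close> by auto
  then show ?thesis by blast
qed

lemma Q_of_bounded_away_from_minimax_sols:
  assumes "\<epsilon> > 0"
  obtains c where "c > 0"
    and "\<And>\<theta>. \<theta> \<in> \<Gamma> \<times> \<Delta> \<Longrightarrow> \<epsilon> \<le> infdist \<theta> (minimax_sols \<Gamma> \<Delta> f) \<Longrightarrow> c \<le> Q_of \<Gamma> \<Delta> f \<theta>"
proof -
  define K where "K = (\<Gamma> \<times> \<Delta>) \<inter> {\<theta>. \<epsilon> \<le> infdist \<theta> (minimax_sols \<Gamma> \<Delta> f)}"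
  show ?thesis
  proof (cases "K = {}")
    case True
    then show ?thesis using that[of 1] by (auto simp: K_def)
  next
    case False
    have "compact K"
      unfolding K_def by (intro compact_Int_closed compact closed_Collect_le continuous_intros)
    moreover have "continuous_on K (Q_of \<Gamma> \<Delta> f)"
      by (rule continuous_on_subset[OF continuous_on_Q_of]) (auto simp: K_def)
    ultimately obtain \<theta>\<^sub>0 where "\<theta>\<^sub>0 \<in> K" and min: "\<And>\<theta>. \<theta> \<in> K \<Longrightarrow> Q_of \<Gamma> \<Delta> f \<theta>\<^sub>0 \<le> Q_of \<Gamma> \<Delta> f \<theta>"
      using continuous_attains_inf[OF _ False] by blast
    have "\<theta>\<^sub>0 \<notin> minimax_sols \<Gamma> \<Delta> f"
      using \<open>\<theta>\<^sub>0 \<in> K\<close> \<open>\<epsilon> > 0\<close> by (auto simp: K_def)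
    then have "Q_of \<Gamma> \<Delta> f \<theta>\<^sub>0 > 0"
      using \<open>\<theta>\<^sub>0 \<in> K\<close> by (auto simp: minimax_sols_eq_approx_sols_0 approx_sols_def K_def)
    then show ?thesis using that min by (auto simp: K_def)
  qed
qed

lemma approx_sols_near_minimax_sols:
  assumes "\<epsilon> > 0"
  obtains \<eta> where "\<eta> > 0"
    and "\<And>g t \<theta>. \<forall>\<theta>\<in>\<Gamma> \<times> \<Delta>. \<bar>g \<theta> - f \<theta>\<bar> \<le> \<eta> \<Longrightarrow> t \<le> \<eta> \<Longrightarrow>
           \<theta> \<in> approx_sols \<Gamma> \<Delta> g t \<Longrightarrow> infdist \<theta> (minimax_sols \<Gamma> \<Delta> f) < \<epsilon>"
proof -
  obtain c where "c > 0"
    and c: "\<And>\<theta>. \<theta> \<in> \<Gamma> \<times> \<Delta> \<Longrightarrow> \<epsilon> \<le> infdist \<theta> (minimax_sols \<Gamma> \<Delta> f) \<Longrightarrow> c \<le> Q_of \<Gamma> \<Delta> f \<theta>"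
    using Q_of_bounded_away_from_minimax_sols[OF assms] by blast
  have "infdist \<theta> (minimax_sols \<Gamma> \<Delta> f) < \<epsilon>"
    if close: "\<forall>\<theta>\<in>\<Gamma> \<times> \<Delta>. \<bar>g \<theta> - f \<theta>\<bar> \<le> c / 4" and "t \<le> c / 4"
      and \<theta>: "\<theta> \<in> approx_sols \<Gamma> \<Delta> g t" for g t \<theta>
  proof -
    have "\<theta> \<in> \<Gamma> \<times> \<Delta>" and "Q_of \<Gamma> \<Delta> g \<theta> \<le> t" using \<theta> by (auto simp: approx_sols_def)
    then have "Q_of \<Gamma> \<Delta> f \<theta> < c"
      using Q_of_perturb[OF close \<open>\<theta> \<in> \<Gamma> \<times> \<Delta>\<close>] \<open>t \<le> c / 4\<close> \<open>c > 0\<close>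
      unfolding abs_le_iff by linarith
    then show ?thesis using c \<open>\<theta> \<in> \<Gamma> \<times> \<Delta>\<close> by force
  qed
  then show ?thesis using that[of "c / 4"] \<open>c > 0\<close> by simp
qed

lemma minimax_sols_subset_approx_sols:
  assumes "\<forall>\<theta>\<in>\<Gamma> \<times> \<Delta>. \<bar>g \<theta> - f \<theta>\<bar> \<le> \<eta>" and "2 * \<eta> \<le> t"
  shows "minimax_sols \<Gamma> \<Delta> f \<subseteq> approx_sols \<Gamma> \<Delta> g t"
  using Q_of_perturb[OF assms(1)] assms(2)
  unfolding minimax_sols_eq_approx_sols_0 approx_sols_def by (force simp: abs_le_iff)

context
  fixes M :: "'a measure" and fh :: "nat \<Rightarrow> 'a \<Rightarrow> 'g \<times> 'd \<Rightarrow> real" and \<tau> :: "nat \<Rightarrow> 'a \<Rightarrow> real"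
begin

lemma approx_sols_consistent:
  assumes uniform: "\<forall>\<epsilon>>0. vanishing_events M
      (\<lambda>n. {\<omega> \<in> space M. \<exists>\<theta>\<in>\<Gamma> \<times> \<Delta>. \<bar>fh n \<omega> \<theta> - f \<theta>\<bar> > \<epsilon>})"
    and tolerance: "tendsto_in_prob M \<tau> 0"
  shows "\<forall>\<epsilon>>0. vanishing_events M (\<lambda>n. {\<omega> \<in> space M.
      \<exists>\<theta>\<in>approx_sols \<Gamma> \<Delta> (fh n \<omega>) (\<tau> n \<omega>). infdist \<theta> (minimax_sols \<Gamma> \<Delta> f) > \<epsilon>})"
    (is "\<forall>\<epsilon>>0. vanishing_events M (?far \<epsilon>)")
proof (intro allI impI)
  fix \<epsilon> :: real assume "\<epsilon> > 0"
  then obtain \<eta> where "\<eta> > 0"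
    and near: "\<And>g t \<theta>. \<forall>\<theta>\<in>\<Gamma> \<times> \<Delta>. \<bar>g \<theta> - f \<theta>\<bar> \<le> \<eta> \<Longrightarrow> t \<le> \<eta> \<Longrightarrow>
           \<theta> \<in> approx_sols \<Gamma> \<Delta> g t \<Longrightarrow> infdist \<theta> (minimax_sols \<Gamma> \<Delta> f) < \<epsilon>"
    using approx_sols_near_minimax_sols by blast
  let ?deviation = "\<lambda>n. {\<omega> \<in> space M. \<exists>\<theta>\<in>\<Gamma> \<times> \<Delta>. \<bar>fh n \<omega> \<theta> - f \<theta>\<bar> > \<eta>}"
  let ?tolerance = "\<lambda>n. {\<omega> \<in> space M. \<bar>\<tau> n \<omega> - 0\<bar> > \<eta>}"
  show "vanishing_events M (?far \<epsilon>)"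
  proof (rule vanishing_events_cover)
    show "vanishing_events M ?deviation"
      using uniform \<open>\<eta> > 0\<close> by blast
    show "vanishing_events M ?tolerance"
      using tolerance \<open>\<eta> > 0\<close> unfolding tendsto_in_prob_def by blast
    show "?far \<epsilon> n \<subseteq> ?deviation n \<union> ?tolerance n" for n
      using near[of "fh n _" "\<tau> n _"] by (force simp: not_less)
  qed
qed

lemma V_of_consistent:
  assumes uniform: "\<forall>\<epsilon>>0. vanishing_events M
      (\<lambda>n. {\<omega> \<in> space M. \<exists>\<theta>\<in>\<Gamma> \<times> \<Delta>. \<bar>fh n \<omega> \<theta> - f \<theta>\<bar> > \<epsilon>})"
  shows "tendsto_in_prob M (\<lambda>n \<omega>. V_of \<Gamma> \<Delta> (fh n \<omega>)) (V_of \<Gamma> \<Delta> f)"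
  unfolding tendsto_in_prob_def
proof (intro allI impI)
  fix \<epsilon> :: real assume "\<epsilon> > 0"
  show "vanishing_events M (\<lambda>n. {\<omega> \<in> space M. \<bar>V_of \<Gamma> \<Delta> (fh n \<omega>) - V_of \<Gamma> \<Delta> f\<bar> > \<epsilon>})"
  proof (rule vanishing_events_subset)
    show "vanishing_events M (\<lambda>n. {\<omega> \<in> space M. \<exists>\<theta>\<in>\<Gamma> \<times> \<Delta>. \<bar>fh n \<omega> \<theta> - f \<theta>\<bar> > \<epsilon>})"
      using uniform \<open>\<epsilon> > 0\<close> by blast
    show "{\<omega> \<in> space M. \<bar>V_of \<Gamma> \<Delta> (fh n \<omega>) - V_of \<Gamma> \<Delta> f\<bar> > \<epsilon>}
      \<subseteq> {\<omega> \<in> space M. \<exists>\<theta>\<in>\<Gamma> \<times> \<Delta>. \<bar>fh n \<omega> \<theta> - f \<theta>\<bar> > \<epsilon>}" for n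
      using V_of_perturb[of "fh n _" \<epsilon>] by (force simp: not_less)
  qed
qed

lemma vanishing_events_minimax_sols_uncovered:
  fixes r :: "nat \<Rightarrow> real"
  assumes "\<forall>e>0. \<exists>K. eventually (\<lambda>n. outer_prob_less M
              {\<omega> \<in> space M. \<exists>\<theta>\<in>\<Gamma> \<times> \<Delta>. r n * \<bar>fh n \<omega> \<theta> - f \<theta>\<bar> > K} e) sequentially"
    and "eventually (\<lambda>n. 0 < r n) sequentially"
    and "\<forall>n. \<forall>\<omega>\<in>space M. 0 < \<tau> n \<omega>"
    and "tendsto_in_prob M (\<lambda>n \<omega>. (1 / r n) / \<tau> n \<omega>) 0"
  shows "vanishing_events M
    (\<lambda>n. {\<omega> \<in> space M. \<not> minimax_sols \<Gamma> \<Delta> f \<subseteq> approx_sols \<Gamma> \<Delta> (fh n \<omega>) (\<tau> n \<omega>)})"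
proof (rule vanishing_events_subset)
  show "vanishing_events M (\<lambda>n. {\<omega> \<in> space M. \<exists>\<theta>\<in>\<Gamma> \<times> \<Delta>. \<tau> n \<omega> < 2 * \<bar>fh n \<omega> \<theta> - f \<theta>\<bar>})"
    by (rule vanishing_events_deviation_exceeds_tolerance[OF assms]) simp
  show "{\<omega> \<in> space M. \<not> minimax_sols \<Gamma> \<Delta> f \<subseteq> approx_sols \<Gamma> \<Delta> (fh n \<omega>) (\<tau> n \<omega>)}
    \<subseteq> {\<omega> \<in> space M. \<exists>\<theta>\<in>\<Gamma> \<times> \<Delta>. \<tau> n \<omega> < 2 * \<bar>fh n \<omega> \<theta> - f \<theta>\<bar>}" for n
    using minimax_sols_subset_approx_sols[of "fh n _" "\<tau> n _ / 2" "\<tau> n _"] by (force simp: not_less)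
qed

context
  assumes covered: "vanishing_events M
    (\<lambda>n. {\<omega> \<in> space M. \<not> minimax_sols \<Gamma> \<Delta> f \<subseteq> approx_sols \<Gamma> \<Delta> (fh n \<omega>) (\<tau> n \<omega>)})"
begin

lemma minimax_sols_consistent:
  "\<forall>\<epsilon>>0. vanishing_events M (\<lambda>n. {\<omega> \<in> space M. \<exists>\<theta>\<in>minimax_sols \<Gamma> \<Delta> f.
      approx_sols \<Gamma> \<Delta> (fh n \<omega>) (\<tau> n \<omega>) = {}
      \<or> infdist \<theta> (approx_sols \<Gamma> \<Delta> (fh n \<omega>) (\<tau> n \<omega>)) > \<epsilon>})"
  by (intro allI impI vanishing_events_subset[OF covered]) auto

lemma hausdorff_consistent:
  assumes near: "\<forall>\<epsilon>>0. vanishing_events M (\<lambda>n. {\<omega> \<in> space M.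
      \<exists>\<theta>\<in>approx_sols \<Gamma> \<Delta> (fh n \<omega>) (\<tau> n \<omega>). infdist \<theta> (minimax_sols \<Gamma> \<Delta> f) > \<epsilon>})"
  shows "\<forall>\<epsilon>>0. vanishing_events M (\<lambda>n. {\<omega> \<in> space M.
      approx_sols \<Gamma> \<Delta> (fh n \<omega>) (\<tau> n \<omega>) = {}
      \<or> hausdorff_dist (approx_sols \<Gamma> \<Delta> (fh n \<omega>) (\<tau> n \<omega>)) (minimax_sols \<Gamma> \<Delta> f) > \<epsilon>})"
proof (intro allI impI)
  fix \<epsilon> :: real assume "\<epsilon> > 0"
  have close: "\<not> (A = {} \<or> hausdorff_dist A (minimax_sols \<Gamma> \<Delta> f) > \<epsilon>)"
    if "minimax_sols \<Gamma> \<Delta> f \<subseteq> A" and "\<not> (\<exists>\<theta>\<in>A. infdist \<theta> (minimax_sols \<Gamma> \<Delta> f) > \<epsilon>)" for A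
    using hausdorff_dist_le[OF minimax_sols_nonempty that(1)] that minimax_sols_nonempty
    by (auto simp: not_less)
  show "vanishing_events M (\<lambda>n. {\<omega> \<in> space M.
      approx_sols \<Gamma> \<Delta> (fh n \<omega>) (\<tau> n \<omega>) = {}
      \<or> hausdorff_dist (approx_sols \<Gamma> \<Delta> (fh n \<omega>) (\<tau> n \<omega>)) (minimax_sols \<Gamma> \<Delta> f) > \<epsilon>})"
    by (rule vanishing_events_cover[OF covered near[rule_format, OF \<open>\<epsilon> > 0\<close>]])
      (use close in blast)
qed

end

end

end


theorem theorem1:
  fixes M :: "'a measure"
    and \<X> :: "'x::euclidean_space set" and \<Z> :: "'z::euclidean_space set"
    and \<Gamma> :: "'g::euclidean_space set" and \<Delta> :: "'d::euclidean_space set"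
    and X :: "'a \<Rightarrow> 'x" and Z :: "'a \<Rightarrow> 'z"
    and Xs :: "nat \<Rightarrow> 'a \<Rightarrow> 'x" and Zs :: "nat \<Rightarrow> 'a \<Rightarrow> 'z"
    and G :: "'z \<Rightarrow> 'g \<Rightarrow> 'x" and D :: "'x \<Rightarrow> 'd \<Rightarrow> real"
    and \<tau> :: "nat \<Rightarrow> 'a \<Rightarrow> real"
    and f :: "'g \<times> 'd \<Rightarrow> real" and \<Theta> :: "('g \<times> 'd) set"
    and fh :: "nat \<Rightarrow> 'a \<Rightarrow> 'g \<times> 'd \<Rightarrow> real"
  assumes M: "prob_space M"
    and \<Theta>_def: "\<Theta> = \<Gamma> \<times> \<Delta>"
    and compact: "compact \<Theta>" and nonempty: "\<Theta> \<noteq> {}"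
    and X_meas: "X \<in> borel_measurable M" and Z_meas: "Z \<in> borel_measurable M"
    and X_range: "\<forall>\<omega>\<in>space M. X \<omega> \<in> \<X>" and Z_range: "\<forall>\<omega>\<in>space M. Z \<omega> \<in> \<Z>"
    and Xs_range: "\<forall>i. \<forall>\<omega>\<in>space M. Xs i \<omega> \<in> \<X>"
    and Zs_range: "\<forall>i. \<forall>\<omega>\<in>space M. Zs i \<omega> \<in> \<Z>"
    and indep: "prob_space.indep_vars M (\<lambda>_. borel) (\<lambda>i \<omega>. (Xs i \<omega>, Zs i \<omega>)) UNIV"
    and ident: "\<forall>i. distr M borel (\<lambda>\<omega>. (Xs i \<omega>, Zs i \<omega>)) = distr M borel (\<lambda>\<omega>. (X \<omega>, Z \<omega>))"
    and G_range: "\<forall>z\<in>\<Z>. \<forall>\<gamma>\<in>\<Gamma>. G z \<gamma> \<in> \<X>"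
    and D_range: "\<forall>x\<in>\<X>. \<forall>\<delta>\<in>\<Delta>. 0 < D x \<delta> \<and> D x \<delta> < 1"
    and F_meas: "\<forall>\<gamma>\<in>\<Gamma>. \<forall>\<delta>\<in>\<Delta>. (\<lambda>\<omega>. ganF D G (X \<omega>) (Z \<omega>) \<gamma> \<delta>) \<in> borel_measurable M"
    and F_cont: "AE \<omega> in M. continuous_on \<Theta> (\<lambda>\<theta>. ganF D G (X \<omega>) (Z \<omega>) (fst \<theta>) (snd \<theta>))"
    and f_def: "f = (\<lambda>\<theta>. integral\<^sup>L M (\<lambda>\<omega>. ganF D G (X \<omega>) (Z \<omega>) (fst \<theta>) (snd \<theta>)))"
    and fh_def: "fh = fhat D G Xs Zs"
  shows
    "((\<forall>\<epsilon>>0. vanishing_events M (\<lambda>n. {\<omega> \<in> space M. \<exists>\<theta>\<in>\<Theta>. \<bar>fh n \<omega> \<theta> - f \<theta>\<bar> > \<epsilon>}))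
       \<and> continuous_on \<Theta> f
       \<and> (\<forall>n. \<tau> n \<in> borel_measurable M) \<and> (\<forall>n. \<forall>\<omega>\<in>space M. 0 \<le> \<tau> n \<omega>)
       \<and> tendsto_in_prob M \<tau> 0
     \<longrightarrow> (\<forall>\<epsilon>>0. vanishing_events M (\<lambda>n. {\<omega> \<in> space M.
              \<exists>\<theta>\<in>approx_sols \<Gamma> \<Delta> (fh n \<omega>) (\<tau> n \<omega>).
                 infdist \<theta> (minimax_sols \<Gamma> \<Delta> f) > \<epsilon>}))
         \<and> tendsto_in_prob M (\<lambda>n \<omega>. V_of \<Gamma> \<Delta> (fh n \<omega>)) (V_of \<Gamma> \<Delta> f))
   \<and>
    ((\<forall>\<epsilon>>0. vanishing_events M (\<lambda>n. {\<omega> \<in> space M. \<exists>\<theta>\<in>\<Theta>. \<bar>fh n \<omega> \<theta> - f \<theta>\<bar> > \<epsilon>}))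
       \<and> continuous_on \<Theta> f
       \<and> (\<forall>e>0. \<exists>K. eventually (\<lambda>n. outer_prob_less M
              {\<omega> \<in> space M. \<exists>\<theta>\<in>\<Theta>. sqrt (real n) * \<bar>fh n \<omega> \<theta> - f \<theta>\<bar> > K} e) sequentially)
       \<and> (\<forall>n. \<tau> n \<in> borel_measurable M) \<and> (\<forall>n. \<forall>\<omega>\<in>space M. 0 < \<tau> n \<omega>)
       \<and> tendsto_in_prob M \<tau> 0
       \<and> tendsto_in_prob M (\<lambda>n \<omega>. (1 / sqrt (real n)) / \<tau> n \<omega>) 0
     \<longrightarrow> (\<forall>\<epsilon>>0. vanishing_events M (\<lambda>n. {\<omega> \<in> space M.
              \<exists>\<theta>\<in>minimax_sols \<Gamma> \<Delta> f.
                 approx_sols \<Gamma> \<Delta> (fh n \<omega>) (\<tau> n \<omega>) = {}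
                 \<or> infdist \<theta> (approx_sols \<Gamma> \<Delta> (fh n \<omega>) (\<tau> n \<omega>)) > \<epsilon>}))
         \<and> (\<forall>\<epsilon>>0. vanishing_events M (\<lambda>n. {\<omega> \<in> space M.
              approx_sols \<Gamma> \<Delta> (fh n \<omega>) (\<tau> n \<omega>) = {}
              \<or> hausdorff_dist (approx_sols \<Gamma> \<Delta> (fh n \<omega>) (\<tau> n \<omega>)) (minimax_sols \<Gamma> \<Delta> f) > \<epsilon>})))"
proof -
  have minimax: "compact_minimax \<Gamma> \<Delta> f" if "continuous_on (\<Gamma> \<times> \<Delta>) f"
    using compact nonempty that unfolding \<Theta>_def by unfold_locales
  have "eventually (\<lambda>n. 0 < sqrt (real n)) sequentially"
    by (rule eventually_mono[OF eventually_gt_at_top[of 0]]) simp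
  note covered = compact_minimax.vanishing_events_minimax_sols_uncovered[OF minimax _ this]
  show ?thesis
    unfolding \<Theta>_def
    apply (intro conjI impI; elim conjE)
    subgoal by (rule compact_minimax.approx_sols_consistent[OF minimax])
    subgoal by (rule compact_minimax.V_of_consistent[OF minimax])
    subgoal by (rule compact_minimax.minimax_sols_consistent[OF minimax covered])
    subgoal by (rule compact_minimax.hausdorff_consistent[OF minimax covered
          compact_minimax.approx_sols_consistent[OF minimax]])
    done
qed

end
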